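(* Let $J$ be an interval of ${}^\bullet\mathbb{R}$. Then both $J$ and its interior $\mathrm{int}(J)$ are connected in the Fermat topology.
   Context: Fermat reals: let $\mathbb{R}_o[t]$ be the set of maps $x:\mathbb{R}_{\ge0}\to\mathbb{R}$, $t\mapsto x_t$, of the form $x_t=r+\sum_{i=1}^k\alpha_i t^{a_i}+o(t)$ as $t\to0^+$, with $k\in\mathbb{N}$, $r,\alpha_i\in\mathbb{R}$, $a_i\in\mathbb{R}_{\ge0}$. Write $x\sim y$ iff $x_t=y_t+o(t)$ as $t\to0^+$. The ring of Fermat reals is ${}^\bullet\mathbb{R}:=\mathbb{R}_o[t]/\sim$ with pointwise operations; $\mathbb{R}\subseteq{}^\bullet\mathbb{R}$ via constants. The standard part of $x=[x_t]$ is ${}^\circ x:=x_0$. ${}^\bullet\mathbb{R}$ is totally ordered by: $x\le y$ iff for representatives there is $z\in\mathbb{R}_o[t]$ with $z\sim0$ and $x_t\le y_t+z_t$ for all sufficiently small $t\ge0$. Let $\overline{{}^\bullet\mathbb{R}}:={}^\bullet\mathbb{R}\cup\{-\infty,+\infty\}$ with ${}^\circ(\pm\infty):=\pm\infty$. An interval of ${}^\bullet\mathbb{R}$ is a set $[a,b]$, $(a,b)$, $[a,b)$ or $(a,b]$ of points $x\in{}^\bullet\mathbb{R}$ satisfying the corresponding inequalities, where $a\le b$ are in $\overline{{}^\bullet\mathbb{R}}$. The Fermat topology on ${}^\bullet\mathbb{R}$ has as open sets the sets ${}^\bullet V:=\{x\in{}^\bullet\mathbb{R}:{}^\circ x\in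 V\}$ for $V\subseteq\mathbb{R}$ open; subsets carry the subspace topology, and $\mathrm{int}$ denotes interior in the Fermat topology (for an interval with endpoints $a,b$ it equals $\{x\in{}^\bullet\mathbb{R}:{}^\circ a<{}^\circ x<{}^\circ b\}$). *)

theory Defs
  imports "HOL-Analysis.Analysis"
begin

definition little_o_t :: "(real \<Rightarrow> real) \<Rightarrow> bool" where
  "little_o_t h \<longleftrightarrow> h 0 = 0 \<and> ((\<lambda>t. h t / t) \<longlongrightarrow> 0) (at_right 0)"

text \<open>t^a for t \<ge> 0, a \<ge> 0, with the convention 0^0 = 1.\<close>
definition tpow :: "real \<Rightarrow> real \<Rightarrow> real" where
  "tpow t a = (if a = 0 then 1 else t powr a)"

text \<open>The set R_o[t] (only the values at t \<ge> 0 are relevant).\<close>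
definition Ro :: "(real \<Rightarrow> real) \<Rightarrow> bool" where
  "Ro x \<longleftrightarrow> (\<exists>(r::real) (k::nat) (\<alpha>::nat \<Rightarrow> real) (a::nat \<Rightarrow> real).
      (\<forall>i<k. a i \<ge> 0) \<and>
      little_o_t (\<lambda>t. x t - (r + (\<Sum>i<k. \<alpha> i * tpow t (a i)))))"

definition fr_rel :: "(real \<Rightarrow> real) \<Rightarrow> (real \<Rightarrow> real) \<Rightarrow> bool" where
  "fr_rel x y \<longleftrightarrow> Ro x \<and> Ro y \<and> little_o_t (\<lambda>t. x t - y t)"

lemma little_o_t_zero: "little_o_t (\<lambda>t. 0)"
  by (simp add: little_o_t_def)

lemma little_o_t_minus: "little_o_t h \<Longrightarrow> little_o_t (\<lambda>t. - h t)"
  unfolding little_o_t_def by (auto dest: tendsto_minus)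

lemma little_o_t_add: "little_o_t h \<Longrightarrow> little_o_t g \<Longrightarrow> little_o_t (\<lambda>t. h t + g t)"
  unfolding little_o_t_def by (auto simp: add_divide_distrib dest: tendsto_add)

lemma Ro_zero: "Ro (\<lambda>t. 0)"
  unfolding Ro_def by (rule exI[of _ 0], rule exI[of _ 0]) (simp add: little_o_t_zero)

lemma part_equivp_fr_rel: "part_equivp fr_rel"
proof (rule part_equivpI)
  show "\<exists>x. fr_rel x x" using Ro_zero by (auto simp: fr_rel_def little_o_t_zero)
  show "symp fr_rel"
  proof (rule sympI)
    fix x y assume "fr_rel x y"
    then show "fr_rel y x"
      using little_o_t_minus[of "\<lambda>t. x t - y t"] by (simp add: fr_rel_def)
  qed
  show "transp fr_rel"
  proof (rule transpI)
    fix x y z assume "fr_rel x y" "fr_rel y z"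
    then show "fr_rel x z"
      using little_o_t_add[of "\<lambda>t. x t - y t" "\<lambda>t. y t - z t"] by (simp add: fr_rel_def)
  qed
qed

quotient_type fermat = "real \<Rightarrow> real" / partial: fr_rel
  by (rule part_equivp_fr_rel)

lift_definition st :: "fermat \<Rightarrow> real" is "\<lambda>x. x 0"
  by (simp add: fr_rel_def little_o_t_def)

definition fle :: "fermat \<Rightarrow> fermat \<Rightarrow> bool" where
  "fle p q \<longleftrightarrow> (\<exists>x y z. fr_rel x x \<and> fr_rel y y \<and> abs_fermat x = p \<and> abs_fermat y = q \<and>
      fr_rel z (\<lambda>t. 0) \<and> (\<exists>\<delta>>0. \<forall>t. 0 \<le> t \<and> t < \<delta> \<longrightarrow> x t \<le> y t + z t))"

definition flt :: "fermat \<Rightarrow> fermat \<Rightarrow> bool" where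
  "flt p q \<longleftrightarrow> fle p q \<and> p \<noteq> q"

datatype efermat = NegInf | Fin fermat | PosInf

fun efle :: "efermat \<Rightarrow> efermat \<Rightarrow> bool" where
  "efle NegInf _ = True"
| "efle _ PosInf = True"
| "efle (Fin a) (Fin b) = fle a b"
| "efle _ _ = False"

definition eflt :: "efermat \<Rightarrow> efermat \<Rightarrow> bool" where
  "eflt a b \<longleftrightarrow> efle a b \<and> a \<noteq> b"

definition fIcc :: "efermat \<Rightarrow> efermat \<Rightarrow> fermat set" where
  "fIcc a b = {x. efle a (Fin x) \<and> efle (Fin x) b}"
definition fIoo :: "efermat \<Rightarrow> efermat \<Rightarrow> fermat set" where
  "fIoo a b = {x. eflt a (Fin x) \<and> eflt (Fin x) b}"
definition fIco :: "efermat \<Rightarrow> efermat \<Rightarrow> fermat set" where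
  "fIco a b = {x. efle a (Fin x) \<and> eflt (Fin x) b}"
definition fIoc :: "efermat \<Rightarrow> efermat \<Rightarrow> fermat set" where
  "fIoc a b = {x. eflt a (Fin x) \<and> efle (Fin x) b}"

definition is_finterval :: "fermat set \<Rightarrow> bool" where
  "is_finterval J \<longleftrightarrow> (\<exists>a b. efle a b \<and>
      (J = fIcc a b \<or> J = fIoo a b \<or> J = fIco a b \<or> J = fIoc a b))"

definition fermat_topology :: "fermat topology" where
  "fermat_topology = pullback_topology UNIV st euclidean"

end

theory Submission
  imports Defs
begin

text \<open>Representatives of Fermat reals are right-continuous at 0, so distinct standard parts force
  the representatives, and hence the Fermat reals, to be strictly ordered the same way. An interval J
  therefore contains every point whose standard part lies strictly between the standard parts of two
  of its points: st ` J is a real interval, and the Fermat interior of J is the preimage under st of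
  the interior of st ` J. As the Fermat topology is the pullback of the Euclidean topology along st,
  a set with connected image under st is connected, and both claims reduce to the connectedness of
  real intervals.\<close>

lemma connectedin_pullback_topology:
  assumes "S \<subseteq> A" "connectedin X (f ` S)"
  shows "connectedin (pullback_topology A f X) S"
  unfolding connectedin
proof (intro conjI notI)
  show "S \<subseteq> topspace (pullback_topology A f X)"
    using assms(1) connectedin_subset_topspace[OF assms(2)]
    by (auto simp: topspace_pullback_topology)
next
  assume "\<exists>E1 E2. openin (pullback_topology A f X) E1 \<and> openin (pullback_topology A f X) E2 \<and>
            S \<subseteq> E1 \<union> E2 \<and> E1 \<inter> E2 \<inter> S = {} \<and> E1 \<inter> S \<noteq> {} \<and> E2 \<inter> S \<noteq> {}"
  then obtain E1 E2 where "openin (pullback_topology A f X) E1" "openin (pullback_topology A f X) E2"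
      and E: "S \<subseteq> E1 \<union> E2" "E1 \<inter> E2 \<inter> S = {}" "E1 \<inter> S \<noteq> {}" "E2 \<inter> S \<noteq> {}"
    by blast
  then obtain U1 U2 where "openin X U1" "openin X U2" "E1 = f -` U1 \<inter> A" "E2 = f -` U2 \<inter> A"
    unfolding openin_pullback_topology by blast
  with E show False
    by (intro connectedinD[OF assms(2), of U1 U2]) auto
qed

lemma tpow_tendsto_at_right_0:
  assumes "a \<ge> 0"
  shows "((\<lambda>t. tpow t a) \<longlongrightarrow> tpow 0 a) (at_right 0)"
proof (cases "a = 0")
  case True
  then show ?thesis by (simp add: tpow_def)
next
  case False
  then have "((\<lambda>t. t powr a) \<longlongrightarrow> 0 powr a) (at_right 0)"
    using assms
    by (intro tendsto_powr') (auto intro: tendsto_ident_at simp: eventually_at_right_field intro!: exI[of _ 1])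
  with False show ?thesis by (simp add: tpow_def)
qed

lemma little_o_t_tendsto_0:
  assumes "little_o_t h"
  shows "(h \<longlongrightarrow> 0) (at_right 0)"
proof -
  have "((\<lambda>t. h t / t * t) \<longlongrightarrow> 0 * 0) (at_right 0)"
    using assms by (intro tendsto_mult) (auto intro: tendsto_ident_at simp: little_o_t_def)
  moreover have "\<forall>\<^sub>F t in at_right (0::real). h t / t * t = h t"
    by (auto simp: eventually_at_right_field intro!: exI[of _ 1])
  ultimately show ?thesis by (simp add: tendsto_cong)
qed

lemma Ro_tendsto_at_right_0:
  assumes "Ro x"
  shows "(x \<longlongrightarrow> x 0) (at_right 0)"
proof -
  obtain r :: real and k :: nat and \<alpha> a :: "nat \<Rightarrow> real" where a: "\<forall>i<k. a i \<ge> 0"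
    and h: "little_o_t (\<lambda>t. x t - (r + (\<Sum>i<k. \<alpha> i * tpow t (a i))))"
    using assms unfolding Ro_def by blast
  define P where "P t = r + (\<Sum>i<k. \<alpha> i * tpow t (a i))" for t
  have "(P \<longlongrightarrow> P 0) (at_right 0)"
    unfolding P_def using a by (intro tendsto_intros tpow_tendsto_at_right_0) auto
  moreover have "((\<lambda>t. x t - P t) \<longlongrightarrow> 0) (at_right 0)"
    using little_o_t_tendsto_0[OF h] by (simp add: P_def)
  ultimately have "((\<lambda>t. (x t - P t) + P t) \<longlongrightarrow> 0 + P 0) (at_right 0)"
    by (intro tendsto_add)
  moreover have "x 0 = P 0"
    using h by (simp add: little_o_t_def P_def)
  ultimately show ?thesis by simp
qed

lemma Ro_const: "Ro (\<lambda>t. r)"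
  unfolding Ro_def by (rule exI[of _ r], rule exI[of _ 0]) (simp add: little_o_t_zero)

lemma st_abs_fermat_const: "st (abs_fermat (\<lambda>t. r)) = r"
  by (simp add: st.abs_eq fr_rel_def Ro_const little_o_t_zero)

lemma surj_st: "surj st"
  by (rule surjI[of st "\<lambda>r. abs_fermat (\<lambda>t. r)"]) (rule st_abs_fermat_const)

lemma fle_imp_st_le:
  assumes "fle p q"
  shows "st p \<le> st q"
proof -
  obtain x y z \<delta> where x: "fr_rel x x" "abs_fermat x = p" and y: "fr_rel y y" "abs_fermat y = q"
      and "fr_rel z (\<lambda>t. 0)" "\<delta> > 0" "\<forall>t. 0 \<le> t \<and> t < \<delta> \<longrightarrow> x t \<le> y t + z t"
    using assms unfolding fle_def by blast
  then have "x 0 \<le> y 0 + z 0" and "z 0 = 0"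
    by (auto simp: fr_rel_def little_o_t_def)
  moreover have "st p = x 0" "st q = y 0"
    using st.abs_eq x y by auto
  ultimately show ?thesis by simp
qed

lemma st_less_imp_fle:
  assumes "st p < st q"
  shows "fle p q"
proof -
  define x y where "x = rep_fermat p" and "y = rep_fermat q"
  have x: "fr_rel x x" "abs_fermat x = p" and y: "fr_rel y y" "abs_fermat y = q"
    unfolding x_def y_def using Quotient3_fermat Quotient3_rep_reflp Quotient3_abs_rep by metis+
  have "x 0 < y 0"
    using assms by (simp add: st.rep_eq x_def y_def)
  moreover have "((\<lambda>t. y t - x t) \<longlongrightarrow> y 0 - x 0) (at_right 0)"
    using x y by (intro tendsto_diff Ro_tendsto_at_right_0) (auto simp: fr_rel_def)
  ultimately have "\<forall>\<^sub>F t in at_right 0. y t - x t > 0"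
    by (intro order_tendstoD) auto
  then obtain \<delta> where "\<delta> > 0" and \<delta>: "\<forall>t>0. t < \<delta> \<longrightarrow> y t - x t > 0"
    by (auto simp: eventually_at_right_field)
  have "\<forall>t. 0 \<le> t \<and> t < \<delta> \<longrightarrow> x t \<le> y t + 0"
  proof (intro allI impI)
    fix t assume "0 \<le> t \<and> t < \<delta>"
    then consider "t = 0" | "0 < t" "t < \<delta>" by linarith
    then show "x t \<le> y t + 0"
      using \<open>x 0 < y 0\<close> \<delta> by cases force+
  qed
  moreover have "fr_rel (\<lambda>t. 0) (\<lambda>t. 0)"
    by (simp add: fr_rel_def Ro_const little_o_t_zero)
  ultimately show ?thesis
    unfolding fle_def using x y \<open>\<delta> > 0\<close> by blast
qed

lemma efle_Fin_st_less_imp_eflt: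
  assumes "efle a (Fin x)" "st x < st z"
  shows "eflt a (Fin z)"
proof (cases a)
  case (Fin c)
  with assms have "st c < st z"
    using fle_imp_st_le[of c x] by simp
  with Fin show ?thesis
    using st_less_imp_fle by (auto simp: eflt_def)
qed (use assms in \<open>auto simp: eflt_def\<close>)

lemma st_less_efle_Fin_imp_eflt:
  assumes "efle (Fin x) b" "st z < st x"
  shows "eflt (Fin z) b"
proof (cases b)
  case (Fin c)
  with assms have "st z < st c"
    using fle_imp_st_le[of x c] by simp
  with Fin show ?thesis
    using st_less_imp_fle by (auto simp: eflt_def)
qed (use assms in \<open>auto simp: eflt_def\<close>)

definition st_convex :: "fermat set \<Rightarrow> bool" where
  "st_convex J \<longleftrightarrow> (\<forall>x\<in>J. \<forall>y\<in>J. \<forall>z. st x < st z \<and> st z < st y \<longrightarrow> z \<in> J)"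

lemma finterval_between_fIoo_fIcc:
  assumes "is_finterval J"
  obtains a b where "fIoo a b \<subseteq> J" "J \<subseteq> fIcc a b"
proof -
  obtain a b where "J = fIcc a b \<or> J = fIoo a b \<or> J = fIco a b \<or> J = fIoc a b"
    using assms unfolding is_finterval_def by blast
  then have "fIoo a b \<subseteq> J \<and> J \<subseteq> fIcc a b"
    by (elim disjE) (auto simp: fIcc_def fIoo_def fIco_def fIoc_def eflt_def)
  with that show ?thesis by blast
qed

lemma finterval_st_convex:
  assumes "is_finterval J"
  shows "st_convex J"
  unfolding st_convex_def
proof (intro ballI allI impI)
  fix x y z assume "x \<in> J" "y \<in> J" and z: "st x < st z \<and> st z < st y"
  obtain a b where "fIoo a b \<subseteq> J" "J \<subseteq> fIcc a b"
    using assms by (rule finterval_between_fIoo_fIcc)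
  with \<open>x \<in> J\<close> \<open>y \<in> J\<close> have "efle a (Fin x)" "efle (Fin y) b"
    by (auto simp: fIcc_def)
  with z have "z \<in> fIoo a b"
    unfolding fIoo_def using efle_Fin_st_less_imp_eflt st_less_efle_Fin_imp_eflt by blast
  with \<open>fIoo a b \<subseteq> J\<close> show "z \<in> J" by blast
qed

lemma st_convex_is_interval_image:
  assumes "st_convex J"
  shows "is_interval (st ` J)"
  unfolding is_interval_1
proof (intro ballI allI impI)
  fix u v r assume uv: "u \<in> st ` J" "v \<in> st ` J" and r: "u \<le> r \<and> r \<le> v"
  then obtain x y where "x \<in> J" "y \<in> J" "st x = u" "st y = v" by auto
  show "r \<in> st ` J"
  proof (cases "r = u \<or> r = v")
    case False
    define z where "z = abs_fermat (\<lambda>t. r)"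
    have "st z = r"
      unfolding z_def by (rule st_abs_fermat_const)
    with False r \<open>st x = u\<close> \<open>st y = v\<close> have "st x < st z" "st z < st y"
      by auto
    with assms \<open>x \<in> J\<close> \<open>y \<in> J\<close> have "z \<in> J"
      unfolding st_convex_def by blast
    with \<open>st z = r\<close> show ?thesis by blast
  qed (use uv in auto)
qed

lemma st_convex_interior_of:
  assumes "st_convex J"
  shows "fermat_topology interior_of J = st -` interior (st ` J)"
proof
  show "fermat_topology interior_of J \<subseteq> st -` interior (st ` J)"
  proof
    fix x assume "x \<in> fermat_topology interior_of J"
    then obtain U where "open U" "st x \<in> U" "st -` U \<subseteq> J"
      unfolding interior_of_def fermat_topology_def openin_pullback_topology by auto
    moreover have "U \<subseteq> st ` J"
      using image_mono[OF \<open>st -` U \<subseteq> J\<close>, of st] by (simp add: surj_st)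
    ultimately show "x \<in> st -` interior (st ` J)"
      using interior_maximal by blast
  qed
next
  have "st -` interior (st ` J) \<subseteq> J"
  proof
    fix z assume "z \<in> st -` interior (st ` J)"
    then obtain e where "e > 0" "ball (st z) e \<subseteq> st ` J"
      by (auto simp: mem_interior)
    then have "st z - e / 2 \<in> st ` J" "st z + e / 2 \<in> st ` J"
      by (simp_all add: subset_iff dist_real_def)
    then obtain x y where "x \<in> J" "y \<in> J" "st x = st z - e / 2" "st y = st z + e / 2"
      by (metis imageE)
    moreover from calculation \<open>e > 0\<close> have "st x < st z" "st z < st y"
      by simp_all
    ultimately show "z \<in> J"
      using assms unfolding st_convex_def by blast
  qed
  moreover have "openin fermat_topology (st -` interior (st ` J))"
    unfolding fermat_topology_def openin_pullback_topology by auto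
  ultimately show "st -` interior (st ` J) \<subseteq> fermat_topology interior_of J"
    by (simp add: interior_of_maximal)
qed

lemma connectedin_fermat_topology:
  assumes "connected (st ` S)"
  shows "connectedin fermat_topology S"
  using assms unfolding fermat_topology_def
  by (intro connectedin_pullback_topology) auto

theorem lemma6:
  assumes "is_finterval J"
  shows "connectedin fermat_topology J \<and> connectedin fermat_topology (fermat_topology interior_of J)"
proof
  have "st_convex J"
    using assms by (rule finterval_st_convex)
  then have "is_interval (st ` J)"
    by (rule st_convex_is_interval_image)
  then show "connectedin fermat_topology J"
    by (intro connectedin_fermat_topology is_interval_connected)
  have "connected (st ` (st -` interior (st ` J)))"
    using \<open>is_interval (st ` J)\<close> surj_st
    by (simp add: surj_image_vimage_eq convex_connected convex_interior is_interval_convex_1)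
  then show "connectedin fermat_topology (fermat_topology interior_of J)"
    using \<open>st_convex J\<close> by (simp add: st_convex_interior_of connectedin_fermat_topology)
qed

end
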